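(* Let $\tau$ be a counterclockwise permutation for monotone non-identical linear functions $f_1,\dots,f_n$. Then the cyclic sequence $(f^{\tau_0},\dots,f^{\tau_{n-1}})$ is strictly unimodal. Moreover, if $f_1,\dots,f_n$ are neither colinear nor potentially identical, then for every $k\in\{0,\dots,n-1\}$ (indices mod $n$, with $\tau_n=\tau_0$), $f^{\tau_k}=f^{\tau_{k+1}}$ implies exactly one of: (i) $f^{\tau_k}=f^{\tau_{k+1}}=\min_{0\le i<n}f^{\tau_i}$ and $\theta(f_{\tau(k+1)})+\pi=_{2\pi}\theta(f^{\tau_k})$; (ii) $f^{\tau_k}=f^{\tau_{k+1}}=\max_{0\le i<n}f^{\tau_i}$ and $\theta(f_{\tau(k+1)})=_{2\pi}\theta(f^{\tau_k})$.
   Context: A linear function is $f(x)=ax+b$; monotone means $a>0$; identical means $f(x)=x$. $\vec f=(b,1-a)^\top$ and $\theta(f)\in[0,2\pi)$ is its polar angle ($\bot$ if $\vec f=0$); $\theta_1=_{2\pi}\theta_2$ means $\theta_1-\theta_2\in2\pi\mathbb{Z}$. For a permutation $\sigma$ of $[n]$, $f^\sigma=f_{\sigma(n)}\circ\cdots\circ f_{\sigma(1)}$; these composites are totally ordered pointwise. $\sigma$ is counterclockwise if, after discarding positions with identical $f_{\sigma(i)}$, there is $k$ with $\theta(f_{\sigma(k)})\le\cdots\le\theta(f_{\sigma(n)})\le\theta(f_{\sigma(1)})\le\cdots\le\theta(f_{\sigma(k-1)})$. $f_1,\dots,f_n$ are colinear if some $\lambda$ satisfies $\theta(f_i)\in\{\lambda,\lambda+\pi\}+2\pi\mathbb{Z}$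 or $\theta(f_i)=\bot$ for all $i$, and potentially identical if $f^\sigma(x)=x$ for some counterclockwise $\sigma$. The $k$-shift is $\tau_k(i)=\tau(i+k)$ for $i\le n-k$, $\tau_k(i)=\tau(i+k-n)$ otherwise. A cyclic sequence $(x_0,\dots,x_{n-1})$ is unimodal if there are $k,\ell$ with $x_k\le x_{k+1}\le\cdots\le x_\ell\ge x_{\ell+1}\ge\cdots\ge x_{k-1}\ge x_k$ (indices mod $n$); it is strictly unimodal if it is unimodal and whenever $x_j=x_{j+1}$ this common value is the minimum or the maximum of the sequence. *)

theory Defs
  imports "HOL-Analysis.Analysis" "HOL-Combinatorics.Permutations"
begin

(* A linear function f(x) = a*x + b is represented by the pair (a, b). *)
type_synonym linfun = "real \<times> real"

definition lapp :: "linfun \<Rightarrow> real \<Rightarrow> real" where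
  "lapp f x = fst f * x + snd f"

(* lcomp g h represents g \<circ> h *)
definition lcomp :: "linfun \<Rightarrow> linfun \<Rightarrow> linfun" where
  "lcomp g h = (fst g * fst h, fst g * snd h + snd g)"

definition monotone_lin :: "linfun \<Rightarrow> bool" where
  "monotone_lin f \<longleftrightarrow> fst f > 0"

definition identical_lin :: "linfun \<Rightarrow> bool" where
  "identical_lin f \<longleftrightarrow> f = (1, 0)"

definition lin_le :: "linfun \<Rightarrow> linfun \<Rightarrow> bool" where
  "lin_le g h \<longleftrightarrow> (\<forall>x. lapp g x \<le> lapp h x)"

definition vecf :: "linfun \<Rightarrow> real \<times> real" where
  "vecf f = (snd f, 1 - fst f)"

(* polar angle in [0, 2pi); None plays the role of \<bottom> *)
definition theta :: "linfun \<Rightarrow> real option" where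
  "theta f = (if vecf f = (0, 0) then None
              else Some (Arg2pi (Complex (fst (vecf f)) (snd (vecf f)))))"

(* theta1 =_{2pi} theta2 (only for defined angles) *)
definition cong2pi :: "real option \<Rightarrow> real option \<Rightarrow> bool" where
  "cong2pi t1 t2 \<longleftrightarrow> (\<exists>x y. t1 = Some x \<and> t2 = Some y \<and> (\<exists>m::int. x - y = 2 * pi * of_int m))"

(* f^\<sigma> restricted to the first m positions: f_{\<sigma> m} \<circ> ... \<circ> f_{\<sigma> 1};
   the composite f^\<sigma> is comp_seq f \<sigma> n *)
fun comp_seq :: "(nat \<Rightarrow> linfun) \<Rightarrow> (nat \<Rightarrow> nat) \<Rightarrow> nat \<Rightarrow> linfun" where
  "comp_seq f \<sigma> 0 = (1, 0)"
| "comp_seq f \<sigma> (Suc m) = lcomp (f (\<sigma> (Suc m))) (comp_seq f \<sigma> m)"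

definition counterclockwise :: "(nat \<Rightarrow> linfun) \<Rightarrow> nat \<Rightarrow> (nat \<Rightarrow> nat) \<Rightarrow> bool" where
  "counterclockwise f n \<sigma> \<longleftrightarrow>
     (\<exists>k. sorted (rotate k (map (\<lambda>i. the (theta (f (\<sigma> i))))
                           (filter (\<lambda>i. \<not> identical_lin (f (\<sigma> i))) [1..<n+1]))))"

definition colinear :: "(nat \<Rightarrow> linfun) \<Rightarrow> nat \<Rightarrow> bool" where
  "colinear f n \<longleftrightarrow> (\<exists>lam::real. \<forall>i\<in>{1..n}.
      theta (f i) = None \<or>
      (\<exists>t m. theta (f i) = Some t \<and> (t = lam + 2 * pi * of_int m \<or> t = lam + pi + 2 * pi * of_int m)))"

definition potentially_identical :: "(nat \<Rightarrow> linfun) \<Rightarrow> nat \<Rightarrow> bool" where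
  "potentially_identical f n \<longleftrightarrow>
     (\<exists>\<sigma>. \<sigma> permutes {1..n} \<and> counterclockwise f n \<sigma> \<and> comp_seq f \<sigma> n = (1, 0))"

definition shift :: "(nat \<Rightarrow> nat) \<Rightarrow> nat \<Rightarrow> nat \<Rightarrow> nat \<Rightarrow> nat" where
  "shift \<tau> n k i = (if i \<le> n - k then \<tau> (i + k) else \<tau> (i + k - n))"

definition cyc_unimodal :: "('a \<Rightarrow> 'a \<Rightarrow> bool) \<Rightarrow> nat \<Rightarrow> (nat \<Rightarrow> 'a) \<Rightarrow> bool" where
  "cyc_unimodal le n x \<longleftrightarrow> (\<exists>k l. k < n \<and> l < n \<and>
     (let d = (l + n - k) mod n in
       (\<forall>j<d. le (x ((k + j) mod n)) (x ((k + j + 1) mod n))) \<and>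
       (\<forall>j. d \<le> j \<and> j < n \<longrightarrow> le (x ((k + j + 1) mod n)) (x ((k + j) mod n)))))"

definition cyc_strictly_unimodal :: "('a \<Rightarrow> 'a \<Rightarrow> bool) \<Rightarrow> nat \<Rightarrow> (nat \<Rightarrow> 'a) \<Rightarrow> bool" where
  "cyc_strictly_unimodal le n x \<longleftrightarrow> cyc_unimodal le n x \<and>
     (\<forall>j<n. x j = x ((j + 1) mod n) \<longrightarrow>
        ((\<forall>i<n. le (x j) (x i)) \<or> (\<forall>i<n. le (x i) (x j))))"

end

theory Submission
  imports Defs
begin

(*
  All the shifted composites share the slope P of f^tau, so f^(tau_k) x = P x + B k, and the
  identity f_(tau(k+1)) o f^(tau_k) = f^(tau_(k+1)) o f_(tau(k+1)) turns the intercepts into an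
  orbit B (k+1) = a_(k+1) B k + b_(k+1) (1 - P) of affine maps, indexed cyclically.
  With v = (b, 1 - a) the vector of the next map and W = (B k, 1 - P) the vector of the
  current composite, the increment B (k+1) - B k is the cross product v x W, and after the
  step W has moved so that v x W has only been multiplied by a > 0.  Along a
  counterclockwise order the vectors v sweep the upper half plane and then the lower one,
  and a cross-product identity shows that inside each half the sign of the increment can
  only go from positive through zero to negative (resp. from negative through zero to
  positive).  Hence the increments follow the cyclic sign pattern 0, -, 0, +, which is strict
  unimodality.  On a plateau v x W = 0, so W is a real multiple of v: a positive multiple at
  the maximum (same angle) and a negative one at the minimum (opposite angle).  The only
  exception is P = 1 with B = 0, where f^tau is the identity.
*)

section \<open>Periodic sequences and cyclic unimodality\<close>

definition periodic_seq :: "(nat \<Rightarrow> 'a) \<Rightarrow> nat \<Rightarrow> bool" where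
  "periodic_seq x n \<longleftrightarrow> (\<forall>i. x (i + n) = x i)"

lemma periodic_seq_add_mult:
  assumes "periodic_seq x n" shows "x (i + m * n) = x i"
proof (induction m)
  case (Suc m)
  have "x (i + Suc m * n) = x ((i + m * n) + n)" by (simp add: algebra_simps)
  with Suc assms show ?case unfolding periodic_seq_def by simp
qed simp

lemma periodic_seq_mod:
  assumes "periodic_seq x n" shows "x (i mod n) = x i"
  using periodic_seq_add_mult[OF assms, of "i mod n" "i div n"] by simp

lemma periodic_seq_mod_eq:
  assumes "periodic_seq x n" "i mod n = j mod n" shows "x i = x j"
  by (metis assms periodic_seq_mod)

lemma periodic_seq_shift:
  "periodic_seq x n \<Longrightarrow> periodic_seq (\<lambda>t. x (r + t)) n"
  unfolding periodic_seq_def by (metis add.assoc)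

lemma periodic_seq_window:
  fixes n k i :: nat assumes "n \<ge> 1" obtains t where "k \<le> t" "t < k + n" "t mod n = i mod n"
proof
  let ?t = "k + (i + n - k mod n) mod n"
  show "k \<le> ?t" "?t < k + n" using assms by auto
  have "k mod n < n" using assms by simp
  then have "k + (i + n - k mod n) = (i + n) + k div n * n"
    using div_mult_mod_eq[of k n] by linarith
  then have "?t mod n = ((i + n) + k div n * n) mod n" by (metis mod_add_right_eq)
  then show "?t mod n = i mod n" by simp
qed

lemma mod_add_diff_mod:
  fixes d n k :: nat assumes "d < n" shows "((k + d) mod n + n - k mod n) mod n = d"
proof -
  have km: "k mod n < n" using assms by simp
  have e: "(k + d) mod n = (k mod n + d) mod n" by (simp add: mod_add_left_eq)
  show ?thesis
  proof (cases "k mod n + d < n")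
    case True
    then show ?thesis unfolding e using assms by simp
  next
    case False
    moreover have "k mod n + d - n < n" using km assms by linarith
    ultimately have "(k mod n + d) mod n = k mod n + d - n" by (simp add: le_mod_geq)
    moreover have "k mod n + d - n + n - k mod n = d" using False by simp
    ultimately show ?thesis unfolding e using assms by simp
  qed
qed

lemma steps_mono:
  fixes x :: "nat \<Rightarrow> 'a :: preorder"
  assumes step: "\<And>t. a \<le> t \<Longrightarrow> t < b \<Longrightarrow> x t \<le> x (Suc t)"
    and "a \<le> i" "i \<le> j" "j \<le> b"
  shows "x i \<le> x j"
  using assms(3,4)
proof (induction j rule: dec_induct)
  case (step m)
  have "x m \<le> x (Suc m)" using assms(2) step.hyps step.prems by (intro assms(1)) auto
  with step show ?case by (meson Suc_leD order_trans)
qed simp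

lemma steps_antimono:
  fixes x :: "nat \<Rightarrow> real"
  assumes "\<And>t. a \<le> t \<Longrightarrow> t < b \<Longrightarrow> x (Suc t) \<le> x t" "a \<le> i" "i \<le> j" "j \<le> b"
  shows "x j \<le> x i"
proof -
  have "- x i \<le> - x j" by (rule steps_mono[of a b "\<lambda>t. - x t"]) (use assms in auto)
  then show ?thesis by simp
qed

text \<open>Unlike \<open>cyc_unimodal\<close>, the rising phase may fill a whole period (\<open>d = n\<close>),
  which makes the notion invariant under negation.\<close>

definition periodic_unimodal :: "(nat \<Rightarrow> real) \<Rightarrow> nat \<Rightarrow> bool" where
  "periodic_unimodal x n \<longleftrightarrow> (\<exists>k d. d \<le> n \<and> (\<forall>j<d. x (k + j) \<le> x (k + j + 1)) \<and>
     (\<forall>j. d \<le> j \<and> j < n \<longrightarrow> x (k + j + 1) \<le> x (k + j)))"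

lemma periodic_unimodal_uminus:
  assumes per: "periodic_seq x n" and uni: "periodic_unimodal x n"
  shows "periodic_unimodal (\<lambda>i. - x i) n"
proof -
  obtain k d where d: "d \<le> n" and inc: "\<forall>j<d. x (k + j) \<le> x (k + j + 1)"
    and dec: "\<forall>j. d \<le> j \<and> j < n \<longrightarrow> x (k + j + 1) \<le> x (k + j)"
    using uni unfolding periodic_unimodal_def by blast
  show ?thesis unfolding periodic_unimodal_def
  proof (rule exI[of _ "k + d"], rule exI[of _ "n - d"], intro conjI allI impI)
    fix j assume "j < n - d"
    then show "- x (k + d + j) \<le> - x (k + d + j + 1)"
      using dec[rule_format, of "d + j"] by (simp add: add.assoc)
  next
    fix j assume j: "n - d \<le> j \<and> j < n"
    define u where "u = j - (n - d)"
    have u: "u < d" "k + d + j = (k + u) + n" "k + d + j + 1 = (k + u + 1) + n"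
      using j d unfolding u_def by auto
    have "x (k + u + n) = x (k + u)" "x (k + u + 1 + n) = x (k + u + 1)"
      using per unfolding periodic_seq_def by blast+
    then show "- x (k + d + j + 1) \<le> - x (k + d + j)"
      unfolding u(2,3) using inc u(1) by simp
  qed simp
qed

lemma periodic_unimodal_shift:
  assumes "periodic_unimodal (\<lambda>t. x (r + t)) n" shows "periodic_unimodal x n"
proof -
  obtain k d where "d \<le> n" "\<forall>j<d. x (r + (k + j)) \<le> x (r + (k + j + 1))"
    "\<forall>j. d \<le> j \<and> j < n \<longrightarrow> x (r + (k + j + 1)) \<le> x (r + (k + j))"
    using assms unfolding periodic_unimodal_def by blast
  then show ?thesis unfolding periodic_unimodal_def
    by (intro exI[of _ "r + k"] exI[of _ d]) (simp add: add.assoc)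
qed

lemma periodic_nondecreasing_const:
  fixes x :: "nat \<Rightarrow> real"
  assumes per: "periodic_seq x n" and inc: "\<forall>j<n. x (k + j) \<le> x (k + j + 1)" and "j \<le> n"
  shows "x (k + j) = x k"
proof -
  have step: "x t \<le> x (Suc t)" if "k \<le> t" "t < k + n" for t
    using inc[rule_format, of "t - k"] that by simp
  have "x k \<le> x (k + j)" "x (k + j) \<le> x (k + n)"
    using steps_mono[of k "k + n" x, OF step] assms(3) by auto
  moreover have "x (k + n) = x k" using per unfolding periodic_seq_def by simp
  ultimately show ?thesis by simp
qed

lemma periodic_unimodal_cyc_unimodal:
  assumes per: "periodic_seq x n" and n: "n \<ge> 1" and uni: "periodic_unimodal x n"
  shows "cyc_unimodal (\<le>) n x"
proof -
  obtain k d where d: "d \<le> n" and inc: "\<forall>j<d. x (k + j) \<le> x (k + j + 1)"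
    and dec: "\<forall>j. d \<le> j \<and> j < n \<longrightarrow> x (k + j + 1) \<le> x (k + j)"
    using uni unfolding periodic_unimodal_def by blast
  define d' where "d' = (if d = n then 0 else d)"
  have d': "d' < n" using d n unfolding d'_def by auto
  have inc': "\<forall>j<d'. x (k + j) \<le> x (k + j + 1)" using inc d unfolding d'_def by auto
  have dec': "x (k + j + 1) \<le> x (k + j)" if "d' \<le> j" "j < n" for j
  proof (cases "d = n")
    case True
    then have const: "x (k + i) = x k" if "i \<le> n" for i
      using periodic_nondecreasing_const[OF per _ that, of k] inc by simp
    show ?thesis using const[of j] const[of "j + 1"] that by simp
  qed (use dec that d'_def in auto)
  have shift: "x ((k mod n + j) mod n) = x (k + j)" for j
    by (rule periodic_seq_mod_eq[OF per]) (simp add: mod_simps)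
  show ?thesis unfolding cyc_unimodal_def Let_def
  proof (rule exI[of _ "k mod n"], rule exI[of _ "(k + d') mod n"],
      unfold mod_add_diff_mod[OF d'], intro conjI allI impI)
    fix j assume "j < d'"
    then show "x ((k mod n + j) mod n) \<le> x ((k mod n + j + 1) mod n)"
      using inc' shift[of j] shift[of "j + 1"] by (simp add: add.assoc)
  next
    fix j assume "d' \<le> j \<and> j < n"
    then show "x ((k mod n + j + 1) mod n) \<le> x ((k mod n + j) mod n)"
      using dec' shift[of j] shift[of "j + 1"] by (simp add: add.assoc)
  qed (use n in auto)
qed

lemma cyc_strictly_unimodal_if_periodic_unimodal:
  assumes per: "periodic_seq x n" and n: "n \<ge> 1" and uni: "periodic_unimodal x n"
    and flat: "\<And>j. x (Suc j) = x j \<Longrightarrow> (\<forall>i. x j \<le> x i) \<or> (\<forall>i. x i \<le> x j)"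
  shows "cyc_strictly_unimodal (\<le>) n x"
  unfolding cyc_strictly_unimodal_def
proof (intro conjI allI impI)
  show "cyc_unimodal (\<le>) n x" by (rule periodic_unimodal_cyc_unimodal[OF per n uni])
next
  fix j assume "j < n" "x j = x ((j + 1) mod n)"
  then have "x (Suc j) = x j" using periodic_seq_mod[OF per, of "j + 1"] by simp
  then show "(\<forall>i<n. x j \<le> x i) \<or> (\<forall>i<n. x i \<le> x j)" using flat by blast
qed

lemma cyc_strictly_unimodal_transfer:
  fixes x :: "nat \<Rightarrow> 'a" and y :: "nat \<Rightarrow> real"
  assumes le: "\<And>i j. i < n \<Longrightarrow> j < n \<Longrightarrow> le (x i) (x j) \<longleftrightarrow> y i \<le> y j"
    and eq: "\<And>i j. i < n \<Longrightarrow> j < n \<Longrightarrow> x i = x j \<longleftrightarrow> y i = y j"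
    and n: "n \<ge> 1" and uni: "cyc_strictly_unimodal (\<le>) n y"
  shows "cyc_strictly_unimodal le n x"
proof -
  have m: "a mod n < n" for a using n by simp
  obtain k l where kl: "k < n" "l < n"
    and inc: "\<forall>j<(l + n - k) mod n. y ((k + j) mod n) \<le> y ((k + j + 1) mod n)"
    and dec: "\<forall>j. (l + n - k) mod n \<le> j \<and> j < n \<longrightarrow> y ((k + j + 1) mod n) \<le> y ((k + j) mod n)"
    using uni unfolding cyc_strictly_unimodal_def cyc_unimodal_def Let_def by blast
  have "cyc_unimodal le n x"
    unfolding cyc_unimodal_def Let_def
    using kl inc dec le[OF m m] by (intro exI[of _ k] exI[of _ l]) auto
  moreover have "(\<forall>i<n. le (x j) (x i)) \<or> (\<forall>i<n. le (x i) (x j))"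
    if "j < n" "x j = x ((j + 1) mod n)" for j
  proof -
    have "y j = y ((j + 1) mod n)" using that eq[OF _ m] by simp
    then have "(\<forall>i<n. y j \<le> y i) \<or> (\<forall>i<n. y i \<le> y j)"
      using uni that(1) unfolding cyc_strictly_unimodal_def by blast
    then show ?thesis using le that(1) by auto
  qed
  ultimately show ?thesis unfolding cyc_strictly_unimodal_def by blast
qed

lemma cyc_strictly_unimodal_const:
  assumes "le a a" and "\<And>i. i < n \<Longrightarrow> x i = a" and "n \<ge> 1"
  shows "cyc_strictly_unimodal le n x"
  using assms unfolding cyc_strictly_unimodal_def cyc_unimodal_def Let_def
  by (intro conjI exI[of _ 0]) auto

definition flat_fall_flat_rise :: "(nat \<Rightarrow> real) \<Rightarrow> nat \<Rightarrow> nat \<Rightarrow> nat \<Rightarrow> nat \<Rightarrow> nat \<Rightarrow> bool" where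
  "flat_fall_flat_rise x n k a b c \<longleftrightarrow> k \<le> a \<and> a \<le> b \<and> b \<le> c \<and> c \<le> k + n \<and>
     (\<forall>t. k \<le> t \<and> t < a \<longrightarrow> x (Suc t) = x t) \<and> (\<forall>t. a \<le> t \<and> t < b \<longrightarrow> x (Suc t) < x t) \<and>
     (\<forall>t. b \<le> t \<and> t < c \<longrightarrow> x (Suc t) = x t) \<and> (\<forall>t. c \<le> t \<and> t < k + n \<longrightarrow> x t < x (Suc t))"

lemma flat_fall_flat_rise_antimono:
  assumes pat: "flat_fall_flat_rise x n k a b c" and "k \<le> i" "i \<le> j" "j \<le> c"
  shows "x j \<le> x i"
proof (rule steps_antimono[of k c x])
  fix t assume "k \<le> t" "t < c"
  then show "x (Suc t) \<le> x t"
    using pat unfolding flat_fall_flat_rise_def by (metis less_eq_real_def linorder_not_le)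
qed (use assms in auto)

lemma flat_fall_flat_rise_mono:
  assumes pat: "flat_fall_flat_rise x n k a b c" and "b \<le> i" "i \<le> j" "j \<le> k + n"
  shows "x i \<le> x j"
proof (rule steps_mono[of b "k + n" x])
  fix t assume "b \<le> t" "t < k + n"
  then show "x t \<le> x (Suc t)"
    using pat unfolding flat_fall_flat_rise_def by (metis less_eq_real_def linorder_not_le)
qed (use assms in auto)

lemma flat_fall_flat_rise_first_flat:
  assumes pat: "flat_fall_flat_rise x n k a b c" and "k \<le> t" "t \<le> a"
  shows "x t = x k"
proof (rule antisym)
  show "x t \<le> x k"
    using flat_fall_flat_rise_antimono[OF pat, of k t] assms unfolding flat_fall_flat_rise_def by simp
  show "x k \<le> x t"
    by (rule steps_mono[of k a x]) (use assms in \<open>auto simp: flat_fall_flat_rise_def\<close>)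
qed

lemma flat_fall_flat_rise_second_flat:
  assumes pat: "flat_fall_flat_rise x n k a b c" and "b \<le> t" "t \<le> c"
  shows "x t = x b"
  using flat_fall_flat_rise_antimono[OF pat, of b t] flat_fall_flat_rise_mono[OF pat, of b t] assms
  unfolding flat_fall_flat_rise_def by simp

lemma flat_fall_flat_rise_max:
  assumes per: "periodic_seq x n" and n: "n \<ge> 1" and pat: "flat_fall_flat_rise x n k a b c"
    and t: "k \<le> t" "t \<le> a"
  shows "x i \<le> x t"
proof -
  obtain i' where i': "k \<le> i'" "i' < k + n" "i' mod n = i mod n" using periodic_seq_window[OF n] .
  have "x i' \<le> x k"
  proof (cases "i' \<le> c")
    case True
    then show ?thesis using flat_fall_flat_rise_antimono[OF pat, of k i'] i' by simp
  next
    case False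
    then have "b \<le> i'" using pat unfolding flat_fall_flat_rise_def by simp
    then have "x i' \<le> x (k + n)" using flat_fall_flat_rise_mono[OF pat, of i' "k + n"] i' by simp
    also have "x (k + n) = x k" using per unfolding periodic_seq_def by simp
    finally show ?thesis .
  qed
  then show ?thesis
    using periodic_seq_mod_eq[OF per i'(3)] flat_fall_flat_rise_first_flat[OF pat t] by simp
qed

lemma flat_fall_flat_rise_min:
  assumes per: "periodic_seq x n" and n: "n \<ge> 1" and pat: "flat_fall_flat_rise x n k a b c"
    and t: "b \<le> t" "t \<le> c"
  shows "x t \<le> x i"
proof -
  obtain i' where i': "k \<le> i'" "i' < k + n" "i' mod n = i mod n" using periodic_seq_window[OF n] .
  have ord: "k \<le> b" "b \<le> c" using pat unfolding flat_fall_flat_rise_def by auto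
  have "x b \<le> x i'"
  proof (cases "i' \<le> b")
    case True
    then show ?thesis using flat_fall_flat_rise_antimono[OF pat, of i' b] i' ord by simp
  next
    case False
    then show ?thesis using flat_fall_flat_rise_mono[OF pat, of b i'] i' by simp
  qed
  then show ?thesis
    using periodic_seq_mod_eq[OF per i'(3)] flat_fall_flat_rise_second_flat[OF pat t] by simp
qed

lemma flat_fall_flat_rise_periodic_unimodal:
  assumes per: "periodic_seq x n" and pat: "flat_fall_flat_rise x n k a b c"
  shows "periodic_unimodal x n"
  unfolding periodic_unimodal_def
proof (rule exI[of _ b], rule exI[of _ "k + n - b"], intro conjI allI impI)
  have ord: "k \<le> b" "b \<le> k + n" using pat unfolding flat_fall_flat_rise_def by auto
  then show "k + n - b \<le> n" by simp
  fix j
  show "x (b + j) \<le> x (b + j + 1)" if "j < k + n - b"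
    using flat_fall_flat_rise_mono[OF pat, of "b + j" "b + j + 1"] that by simp
  show "x (b + j + 1) \<le> x (b + j)" if "k + n - b \<le> j \<and> j < n"
  proof -
    define t where "t = b + j - n"
    have t: "k \<le> t" "t < b" "b + j = t + n" "b + j + 1 = Suc t + n"
      using that ord unfolding t_def by auto
    have "x (Suc t) \<le> x t"
      using flat_fall_flat_rise_antimono[OF pat, of t "Suc t"] t pat
      unfolding flat_fall_flat_rise_def by simp
    moreover have "x (t + n) = x t" "x (Suc t + n) = x (Suc t)"
      using per unfolding periodic_seq_def by blast+
    ultimately show ?thesis unfolding t(3,4) by simp
  qed
qed

lemma flat_fall_flat_rise_of_steps:
  fixes x :: "nat \<Rightarrow> real"
  assumes per: "periodic_seq x n" and s: "s1 \<le> s2" "s2 \<le> s3" "s3 \<le> s4" "s4 \<le> n"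
    and rise1: "\<And>t. t < s1 \<Longrightarrow> x t < x (Suc t)"
    and flat1: "\<And>t. s1 \<le> t \<Longrightarrow> t < s2 \<Longrightarrow> x (Suc t) = x t"
    and fall: "\<And>t. s2 \<le> t \<Longrightarrow> t < s3 \<Longrightarrow> x (Suc t) < x t"
    and flat2: "\<And>t. s3 \<le> t \<Longrightarrow> t < s4 \<Longrightarrow> x (Suc t) = x t"
    and rise2: "\<And>t. s4 \<le> t \<Longrightarrow> t < n \<Longrightarrow> x t < x (Suc t)"
  shows "flat_fall_flat_rise x n s1 s2 s3 s4"
  unfolding flat_fall_flat_rise_def
proof (intro conjI allI impI)
  fix t assume t: "s4 \<le> t \<and> t < s1 + n"
  show "x t < x (Suc t)"
  proof (cases "t < n")
    case False
    define u where "u = t - n"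
    have u: "u < s1" "t = u + n" using t False unfolding u_def by auto
    moreover have "x (u + n) = x u" "x (Suc u + n) = x (Suc u)"
      using per unfolding periodic_seq_def by blast+
    ultimately show ?thesis using rise1[of u] by simp
  qed (use rise2 t in simp)
qed (use assms in auto)

section \<open>Thresholds and arguments of plane vectors\<close>

lemma threshold_upward_closed:
  fixes a b :: nat
  assumes "a \<le> b" and up: "\<And>t. a \<le> t \<Longrightarrow> Suc t < b \<Longrightarrow> P t \<Longrightarrow> P (Suc t)"
  obtains s where "a \<le> s" "s \<le> b" "\<And>t. a \<le> t \<Longrightarrow> t < b \<Longrightarrow> P t \<longleftrightarrow> s \<le> t"
proof (cases "\<exists>t. a \<le> t \<and> t < b \<and> P t")
  case True
  define s where "s = (LEAST t. a \<le> t \<and> t < b \<and> P t)"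
  have s: "a \<le> s" "s < b" "P s" using LeastI_ex[OF True] unfolding s_def by auto
  have "P t \<longleftrightarrow> s \<le> t" if "a \<le> t" "t < b" for t
  proof
    show "P t \<Longrightarrow> s \<le> t" unfolding s_def using that by (simp add: Least_le)
    show "P t" if "s \<le> t"
      using that \<open>t < b\<close>
    proof (induction t rule: dec_induct)
      case (step m)
      then show ?case using up[of m] s(1) by simp
    qed (use s in simp)
  qed
  then show ?thesis using that s by simp
next
  case False
  then show ?thesis using that[of b] assms(1) by auto
qed

lemma sorted_value_threshold:
  fixes \<theta> :: "nat \<Rightarrow> real"
  assumes sorted: "\<And>t t'. t \<le> t' \<Longrightarrow> t' < n \<Longrightarrow> \<theta> t \<le> \<theta> t'"
    and up: "\<And>u u'. u \<le> u' \<Longrightarrow> P u \<Longrightarrow> P u'"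
  obtains c where "c \<le> n" "\<And>t. t < n \<Longrightarrow> P (\<theta> t) \<longleftrightarrow> c \<le> t"
proof (rule threshold_upward_closed[of 0 n "\<lambda>t. P (\<theta> t)"])
  show "P (\<theta> (Suc t))" if "0 \<le> t" "Suc t < n" "P (\<theta> t)" for t
    using up[OF sorted[of t "Suc t"] that(3)] that(2) by simp
qed (use that in auto)

lemma sign_thresholds:
  fixes \<kappa> :: "nat \<Rightarrow> real"
  assumes "a \<le> b"
    and le: "\<And>t. a \<le> t \<Longrightarrow> Suc t < b \<Longrightarrow> \<kappa> t \<le> 0 \<Longrightarrow> \<kappa> (Suc t) \<le> 0"
    and lt: "\<And>t. a \<le> t \<Longrightarrow> Suc t < b \<Longrightarrow> \<kappa> t < 0 \<Longrightarrow> \<kappa> (Suc t) < 0"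
  obtains s s' where "a \<le> s" "s \<le> s'" "s' \<le> b"
    "\<And>t. a \<le> t \<Longrightarrow> t < s \<Longrightarrow> 0 < \<kappa> t"
    "\<And>t. s \<le> t \<Longrightarrow> t < s' \<Longrightarrow> \<kappa> t = 0"
    "\<And>t. s' \<le> t \<Longrightarrow> t < b \<Longrightarrow> \<kappa> t < 0"
proof -
  obtain s where s: "a \<le> s" "s \<le> b" "\<And>t. a \<le> t \<Longrightarrow> t < b \<Longrightarrow> \<kappa> t \<le> 0 \<longleftrightarrow> s \<le> t"
    using threshold_upward_closed[of a b "\<lambda>t. \<kappa> t \<le> 0"] assms(1) le by blast
  obtain s' where s': "a \<le> s'" "s' \<le> b" "\<And>t. a \<le> t \<Longrightarrow> t < b \<Longrightarrow> \<kappa> t < 0 \<longleftrightarrow> s' \<le> t"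
    using threshold_upward_closed[of a b "\<lambda>t. \<kappa> t < 0"] assms(1) lt by blast
  have "s \<le> s'"
  proof (cases "s' < b")
    case True
    then show ?thesis using s(3)[of s'] s'(1) s'(3)[of s'] by simp
  qed (use s' s in simp)
  moreover have "0 < \<kappa> t" if "a \<le> t" "t < s" for t
    using s(3)[of t] that s(2) by simp
  moreover have "\<kappa> t = 0" if "s \<le> t" "t < s'" for t
    using s(3)[of t] s'(3)[of t] that s(1) s'(2) by simp
  moreover have "\<kappa> t < 0" if "s' \<le> t" "t < b" for t
    using s'(3)[of t] that s'(1) by simp
  ultimately show ?thesis using that s(1) s'(2) by blast
qed

lemma sign_propagation_pos:
  fixes p q w y y' :: real
  assumes "0 < p" "0 < q" "0 \<le> w" "p * y' = q * y - w"
  shows "y \<le> 0 \<Longrightarrow> y' \<le> 0" and "y < 0 \<Longrightarrow> y' < 0"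
proof -
  show "y' \<le> 0" if "y \<le> 0" using assms that by (smt (verit) mult_eq_0_iff zero_le_mult_iff)
  show "y' < 0" if "y < 0" using assms that by (smt (verit, ccfv_SIG) mult_less_0_iff)
qed

lemma sign_propagation_neg:
  fixes p q w y y' :: real
  assumes "p < 0" "q < 0" "0 \<le> w" "p * y' = q * y - w"
  shows "0 \<le> y \<Longrightarrow> 0 \<le> y'" and "0 < y \<Longrightarrow> 0 < y'"
proof -
  show "0 \<le> y'" if "0 \<le> y" using assms that by (smt (verit, best) mult_le_0_iff)
  show "0 < y'" if "0 < y" using assms that by (smt (verit) mult_less_0_iff)
qed

lemma cross_nonneg_if_Arg2pi_le:
  assumes "Arg2pi z \<le> Arg2pi w" "Arg2pi w < Arg2pi z + pi"
  shows "0 \<le> Im (cnj z * w)"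
proof -
  have "Im (cnj z * w)
      = (cmod z * cos (Arg2pi z)) * (cmod w * sin (Arg2pi w)) - (cmod z * sin (Arg2pi z)) * (cmod w * cos (Arg2pi w))"
    by (simp add: cos_Arg2pi sin_Arg2pi)
  also have "\<dots> = cmod z * cmod w * sin (Arg2pi w - Arg2pi z)"
    by (simp add: sin_diff algebra_simps)
  also have "\<dots> \<ge> 0"
    using assms by (intro mult_nonneg_nonneg sin_ge_zero) auto
  finally show ?thesis .
qed

lemma cross_nonneg_if_Arg2pi_le_halfplane:
  assumes "Arg2pi z \<le> Arg2pi w" and "(0 < Im z \<and> 0 < Im w) \<or> (Im z < 0 \<and> Im w < 0)"
  shows "0 \<le> Im (cnj z * w)"
proof (rule cross_nonneg_if_Arg2pi_le[OF assms(1)])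
  show "Arg2pi w < Arg2pi z + pi"
    using assms(2) Arg2pi_lt_pi[of z] Arg2pi_lt_pi[of w] Arg2pi_le_pi[of z] Arg2pi_lt_2pi[of w]
    by auto
qed

lemma Arg2pi_sorted_classes:
  fixes v :: "nat \<Rightarrow> complex" and n :: nat
  assumes nz: "\<And>t. t < n \<Longrightarrow> v t \<noteq> 0"
    and sorted: "\<And>t t'. t \<le> t' \<Longrightarrow> t' < n \<Longrightarrow> Arg2pi (v t) \<le> Arg2pi (v t')"
  obtains c1 c2 c3 where "c1 \<le> c2" "c2 \<le> c3" "c3 \<le> n"
    "\<And>t. t < c1 \<Longrightarrow> Im (v t) = 0 \<and> 0 < Re (v t)"
    "\<And>t. c1 \<le> t \<Longrightarrow> t < c2 \<Longrightarrow> 0 < Im (v t)"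
    "\<And>t. c2 \<le> t \<Longrightarrow> t < c3 \<Longrightarrow> Im (v t) = 0 \<and> Re (v t) < 0"
    "\<And>t. c3 \<le> t \<Longrightarrow> t < n \<Longrightarrow> Im (v t) < 0"
proof -
  note threshold = sorted_value_threshold[of n "\<lambda>t. Arg2pi (v t)", OF sorted]
  obtain c1 where c1: "c1 \<le> n" "\<And>t. t < n \<Longrightarrow> 0 < Arg2pi (v t) \<longleftrightarrow> c1 \<le> t"
    by (rule threshold[of "\<lambda>u. 0 < u"]) auto
  obtain c2 where c2: "c2 \<le> n" "\<And>t. t < n \<Longrightarrow> pi \<le> Arg2pi (v t) \<longleftrightarrow> c2 \<le> t"
    by (rule threshold[of "\<lambda>u. pi \<le> u"]) auto
  obtain c3 where c3: "c3 \<le> n" "\<And>t. t < n \<Longrightarrow> pi < Arg2pi (v t) \<longleftrightarrow> c3 \<le> t"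
    by (rule threshold[of "\<lambda>u. pi < u"]) auto
  have "c1 \<le> c2"
  proof (cases "c2 < n")
    case True
    then have "0 < Arg2pi (v c2)" using c2(2)[of c2] pi_gt_zero by linarith
    then show ?thesis using c1(2) True by blast
  qed (use c1 in simp)
  moreover have "c2 \<le> c3"
  proof (cases "c3 < n")
    case True
    then have "pi \<le> Arg2pi (v c3)" using c3(2)[of c3] by linarith
    then show ?thesis using c2(2) True by blast
  qed (use c2 in simp)
  moreover have "Im (v t) = 0 \<and> 0 < Re (v t)" if "t < c1" for t
  proof -
    have "t < n" using that c1 by simp
    then have "Arg2pi (v t) = 0" using c1(2)[of t] that Arg2pi_ge_0[of "v t"] by simp
    then have "Im (v t) = 0" "0 \<le> Re (v t)" unfolding Arg2pi_eq_0 complex_is_Real_iff by auto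
    moreover have "v t \<noteq> 0" using nz \<open>t < n\<close> by simp
    ultimately show ?thesis by (simp add: complex_eq_iff)
  qed
  moreover have "0 < Im (v t)" if "c1 \<le> t" "t < c2" for t
  proof -
    have "t < n" using that c2 by simp
    then show ?thesis using c1(2)[of t] c2(2)[of t] that Arg2pi_lt_pi[of "v t"] by simp
  qed
  moreover have "Im (v t) = 0 \<and> Re (v t) < 0" if "c2 \<le> t" "t < c3" for t
  proof -
    have "t < n" using that c3 by simp
    then have "Arg2pi (v t) = pi" using c2(2)[of t] c3(2)[of t] that by simp
    then show ?thesis unfolding Arg2pi_eq_pi complex_is_Real_iff by simp
  qed
  moreover have "Im (v t) < 0" if "c3 \<le> t" "t < n" for t
    using c3(2)[of t] that Arg2pi_le_pi[of "v t"] by simp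
  ultimately show ?thesis using that c3(1) by blast
qed

lemma parallel_eq_real_multiple:
  fixes v w :: complex
  assumes "v \<noteq> 0" "Im (cnj v * w) = 0"
  shows "w = of_real (Re (cnj v * w) / (cmod v)\<^sup>2) * v"
proof -
  have "cnj v * w = of_real (Re (cnj v * w))" using assms(2) by (simp add: complex_eq_iff)
  moreover have "v * cnj v = of_real ((cmod v)\<^sup>2)" by (rule complex_norm_square[symmetric])
  ultimately have "of_real ((cmod v)\<^sup>2) * w = of_real (Re (cnj v * w)) * v"
    by (metis mult.assoc mult.commute)
  then show ?thesis using assms(1) by (simp add: field_simps)
qed

lemma Arg2pi_parallel_pos:
  assumes "v \<noteq> 0" "Im (cnj v * w) = 0" "0 < Re (cnj v * w)"
  shows "Arg2pi w = Arg2pi v"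
  using parallel_eq_real_multiple[OF assms(1,2)] assms by (metis Arg2pi_times_of_real divide_pos_pos zero_less_power zero_less_norm_iff)

lemma Arg2pi_parallel_neg:
  assumes "v \<noteq> 0" "Im (cnj v * w) = 0" "Re (cnj v * w) < 0"
  shows "Arg2pi w = Arg2pi (- v)"
proof -
  define \<rho> where "\<rho> = Re (cnj v * w) / (cmod v)\<^sup>2"
  have "w = of_real (- \<rho>) * (- v)"
    using parallel_eq_real_multiple[OF assms(1,2)] unfolding \<rho>_def by simp
  moreover have "0 < - \<rho>" using assms unfolding \<rho>_def by (simp add: divide_neg_pos)
  ultimately show ?thesis by (metis Arg2pi_times_of_real)
qed

lemma pi_not_2pi_multiple: "pi \<noteq> 2 * pi * of_int m" "- pi \<noteq> 2 * pi * of_int m"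
proof -
  have "pi \<noteq> 2 * pi * of_int k" for k
  proof
    assume "pi = 2 * pi * of_int k"
    then have "(1::real) = of_int (2 * k)" by simp
    then have "1 = 2 * k" by linarith
    then show False by presburger
  qed
  from this[of m] this[of "- m"] show "pi \<noteq> 2 * pi * of_int m" "- pi \<noteq> 2 * pi * of_int m" by auto
qed

lemma cong2pi_Some: "cong2pi (Some x) (Some y) \<longleftrightarrow> (\<exists>m::int. x - y = 2 * pi * of_int m)"
  unfolding cong2pi_def by simp

lemma cong2pi_plateau_pos:
  assumes "v \<noteq> 0" "Im (cnj v * w) = 0" "0 < Re (cnj v * w)"
  shows "cong2pi (Some (Arg2pi v)) (Some (Arg2pi w))"
    and "\<not> cong2pi (Some (Arg2pi v + pi)) (Some (Arg2pi w))"
  using Arg2pi_parallel_pos[OF assms] pi_not_2pi_multiple unfolding cong2pi_Some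
  by (auto intro: exI[of _ 0])

lemma cong2pi_plateau_neg:
  assumes "v \<noteq> 0" "Im (cnj v * w) = 0" "Re (cnj v * w) < 0"
  shows "\<not> cong2pi (Some (Arg2pi v)) (Some (Arg2pi w))"
    and "cong2pi (Some (Arg2pi v + pi)) (Some (Arg2pi w))"
proof -
  have w: "Arg2pi w = (if Arg2pi v < pi then Arg2pi v + pi else Arg2pi v - pi)"
    using Arg2pi_parallel_neg[OF assms] Arg2pi_minus[OF assms(1)] by simp
  show "\<not> cong2pi (Some (Arg2pi v)) (Some (Arg2pi w))"
    unfolding cong2pi_Some w using pi_not_2pi_multiple by auto
  show "cong2pi (Some (Arg2pi v + pi)) (Some (Arg2pi w))"
    unfolding cong2pi_Some w by (auto intro: exI[of _ 0] exI[of _ 1])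
qed

section \<open>Affine orbits with sorted angles\<close>

text \<open>For the orbit \<open>X (Suc t) = \<alpha> t * X t + \<beta> t * c\<close> let \<open>v t = (\<beta> t, 1 - \<alpha> t)\<close> and
  \<open>W t = (X t, c)\<close>. The increment \<open>X (Suc t) - X t = \<beta> t * c - (1 - \<alpha> t) * X t\<close> is the cross
  product of \<open>v t\<close> and \<open>W t\<close>, and \<open>\<beta> t * X t + (1 - \<alpha> t) * c\<close> is their inner product.
  The next identity expresses the following increment through the current one and the cross
  product of \<open>v t\<close> and \<open>v (Suc t)\<close>, which is nonnegative along a counterclockwise order.\<close>

lemma affine_step_cross:
  fixes \<alpha> \<beta> :: "nat \<Rightarrow> real"
  assumes "X (Suc t) = \<alpha> t * X t + \<beta> t * c"
  shows "(1 - \<alpha> t) * (\<beta> (Suc t) * c - (1 - \<alpha> (Suc t)) * X (Suc t))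
    = \<alpha> t * (1 - \<alpha> (Suc t)) * (\<beta> t * c - (1 - \<alpha> t) * X t)
      - c * Im (cnj (Complex (\<beta> t) (1 - \<alpha> t)) * Complex (\<beta> (Suc t)) (1 - \<alpha> (Suc t)))"
  using assms by (simp add: algebra_simps)

lemma affine_plateau_dot:
  fixes a b x c :: real
  assumes "b * c - (1 - a) * x = 0"
  shows "(1 - a) * (b * x + (1 - a) * c) = c * (b\<^sup>2 + (1 - a)\<^sup>2)"
proof -
  have "(1 - a) * (b * x + (1 - a) * c) = b * ((1 - a) * x) + (1 - a)\<^sup>2 * c"
    by (simp add: algebra_simps power2_eq_square)
  also have "(1 - a) * x = b * c" using assms by simp
  finally show ?thesis by (simp add: algebra_simps power2_eq_square)
qed

lemma affine_increment_sign_propagation: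
  fixes X \<alpha> \<beta> :: "nat \<Rightarrow> real" and c :: real
  defines "v \<equiv> \<lambda>t. Complex (\<beta> t) (1 - \<alpha> t)" and "\<kappa> \<equiv> \<lambda>t. \<beta> t * c - (1 - \<alpha> t) * X t"
  assumes step: "X (Suc t) = \<alpha> t * X t + \<beta> t * c" and "0 < \<alpha> t" "0 \<le> c"
    and sorted: "Arg2pi (v t) \<le> Arg2pi (v (Suc t))"
  shows "\<alpha> t < 1 \<Longrightarrow> \<alpha> (Suc t) < 1 \<Longrightarrow> \<kappa> t \<le> 0 \<Longrightarrow> \<kappa> (Suc t) \<le> 0"
    and "\<alpha> t < 1 \<Longrightarrow> \<alpha> (Suc t) < 1 \<Longrightarrow> \<kappa> t < 0 \<Longrightarrow> \<kappa> (Suc t) < 0"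
    and "1 < \<alpha> t \<Longrightarrow> 1 < \<alpha> (Suc t) \<Longrightarrow> 0 \<le> \<kappa> t \<Longrightarrow> 0 \<le> \<kappa> (Suc t)"
    and "1 < \<alpha> t \<Longrightarrow> 1 < \<alpha> (Suc t) \<Longrightarrow> 0 < \<kappa> t \<Longrightarrow> 0 < \<kappa> (Suc t)"
proof -
  have propagate: "(1 - \<alpha> t) * \<kappa> (Suc t) = \<alpha> t * (1 - \<alpha> (Suc t)) * \<kappa> t - c * Im (cnj (v t) * v (Suc t))"
    unfolding \<kappa>_def v_def
    by (rule affine_step_cross[where X = X and \<alpha> = \<alpha> and \<beta> = \<beta> and c = c, OF step])
  have cross: "0 \<le> c * Im (cnj (v t) * v (Suc t))"
    if "(\<alpha> t < 1 \<and> \<alpha> (Suc t) < 1) \<or> (1 < \<alpha> t \<and> 1 < \<alpha> (Suc t))"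
    using cross_nonneg_if_Arg2pi_le_halfplane[OF sorted] that \<open>0 \<le> c\<close> unfolding v_def by simp
  show "\<kappa> (Suc t) \<le> 0" if "\<alpha> t < 1" "\<alpha> (Suc t) < 1" "\<kappa> t \<le> 0"
    using sign_propagation_pos(1)[OF _ _ cross propagate] that \<open>0 < \<alpha> t\<close> by simp
  show "\<kappa> (Suc t) < 0" if "\<alpha> t < 1" "\<alpha> (Suc t) < 1" "\<kappa> t < 0"
    using sign_propagation_pos(2)[OF _ _ cross propagate] that \<open>0 < \<alpha> t\<close> by simp
  show "0 \<le> \<kappa> (Suc t)" if "1 < \<alpha> t" "1 < \<alpha> (Suc t)" "0 \<le> \<kappa> t"
    using sign_propagation_neg(1)[OF _ _ cross propagate] that \<open>0 < \<alpha> t\<close> by (simp add: mult_pos_neg)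
  show "0 < \<kappa> (Suc t)" if "1 < \<alpha> t" "1 < \<alpha> (Suc t)" "0 < \<kappa> t"
    using sign_propagation_neg(2)[OF _ _ cross propagate] that \<open>0 < \<alpha> t\<close> by (simp add: mult_pos_neg)
qed

lemma affine_orbit_increment_signs:
  fixes X \<alpha> \<beta> :: "nat \<Rightarrow> real" and c :: real
  defines "v \<equiv> \<lambda>t. Complex (\<beta> t) (1 - \<alpha> t)" and "\<kappa> \<equiv> \<lambda>t. \<beta> t * c - (1 - \<alpha> t) * X t"
  assumes apos: "\<And>t. t < n \<Longrightarrow> 0 < \<alpha> t" and nz: "\<And>t. t < n \<Longrightarrow> v t \<noteq> 0"
    and sorted: "\<And>t t'. t \<le> t' \<Longrightarrow> t' < n \<Longrightarrow> Arg2pi (v t) \<le> Arg2pi (v t')"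
    and step: "\<And>t. t < n \<Longrightarrow> X (Suc t) = \<alpha> t * X t + \<beta> t * c"
    and c: "0 < c"
  obtains s1 s2 s3 s4 where "s1 \<le> s2" "s2 \<le> s3" "s3 \<le> s4" "s4 \<le> n"
    "\<And>t. t < s1 \<Longrightarrow> 0 < \<kappa> t"
    "\<And>t. s1 \<le> t \<Longrightarrow> t < s2 \<Longrightarrow> \<kappa> t = 0 \<and> \<alpha> t < 1"
    "\<And>t. s2 \<le> t \<Longrightarrow> t < s3 \<Longrightarrow> \<kappa> t < 0"
    "\<And>t. s3 \<le> t \<Longrightarrow> t < s4 \<Longrightarrow> \<kappa> t = 0 \<and> 1 < \<alpha> t"
    "\<And>t. s4 \<le> t \<Longrightarrow> t < n \<Longrightarrow> 0 < \<kappa> t"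
proof -
  obtain c1 c2 c3 where cc: "c1 \<le> c2" "c2 \<le> c3" "c3 \<le> n"
    and cl0: "\<And>t. t < c1 \<Longrightarrow> \<alpha> t = 1 \<and> 0 < \<beta> t"
    and cl1: "\<And>t. c1 \<le> t \<Longrightarrow> t < c2 \<Longrightarrow> \<alpha> t < 1"
    and cl2: "\<And>t. c2 \<le> t \<Longrightarrow> t < c3 \<Longrightarrow> \<alpha> t = 1 \<and> \<beta> t < 0"
    and cl3: "\<And>t. c3 \<le> t \<Longrightarrow> t < n \<Longrightarrow> 1 < \<alpha> t"
    by (rule Arg2pi_sorted_classes[of n v, OF nz sorted]) (auto simp: v_def)
  have sorted_step: "Arg2pi (Complex (\<beta> t) (1 - \<alpha> t)) \<le> Arg2pi (Complex (\<beta> (Suc t)) (1 - \<alpha> (Suc t)))"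
    if "Suc t < n" for t
    using sorted[of t "Suc t"] that unfolding v_def by simp
  note propagation = affine_increment_sign_propagation[where X = X and \<alpha> = \<alpha> and \<beta> = \<beta> and c = c,
      OF step apos _ sorted_step]
  obtain s1 s2 where s12: "c1 \<le> s1" "s1 \<le> s2" "s2 \<le> c2"
    and pos1: "\<And>t. c1 \<le> t \<Longrightarrow> t < s1 \<Longrightarrow> 0 < \<kappa> t"
    and zero1: "\<And>t. s1 \<le> t \<Longrightarrow> t < s2 \<Longrightarrow> \<kappa> t = 0"
    and neg1: "\<And>t. s2 \<le> t \<Longrightarrow> t < c2 \<Longrightarrow> \<kappa> t < 0"
  proof (rule sign_thresholds[of c1 c2 \<kappa>])
    fix t assume t: "c1 \<le> t" "Suc t < c2"
    then have "Suc t < n" "\<alpha> t < 1" "\<alpha> (Suc t) < 1" using cl1 cc by auto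
    then show "\<kappa> t \<le> 0 \<Longrightarrow> \<kappa> (Suc t) \<le> 0" "\<kappa> t < 0 \<Longrightarrow> \<kappa> (Suc t) < 0"
      using propagation(1,2)[of t] c unfolding \<kappa>_def by simp_all
  qed (use cc in auto)
  obtain s3 s4 where s34: "c3 \<le> s3" "s3 \<le> s4" "s4 \<le> n"
    and neg3: "\<And>t. c3 \<le> t \<Longrightarrow> t < s3 \<Longrightarrow> \<kappa> t < 0"
    and zero3: "\<And>t. s3 \<le> t \<Longrightarrow> t < s4 \<Longrightarrow> \<kappa> t = 0"
    and pos3: "\<And>t. s4 \<le> t \<Longrightarrow> t < n \<Longrightarrow> 0 < \<kappa> t"
  proof (rule sign_thresholds[of c3 n "\<lambda>t. - \<kappa> t"])
    fix t assume t: "c3 \<le> t" "Suc t < n"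
    then have "1 < \<alpha> t" "1 < \<alpha> (Suc t)" using cl3 by auto
    then show "- \<kappa> t \<le> 0 \<Longrightarrow> - \<kappa> (Suc t) \<le> 0" "- \<kappa> t < 0 \<Longrightarrow> - \<kappa> (Suc t) < 0"
      using propagation(3,4)[of t] t c unfolding \<kappa>_def by simp_all
  qed (use cc in auto)
  show ?thesis
  proof (rule that[of s1 s2 s3 s4])
    show "0 < \<kappa> t" if "t < s1" for t
      using cl0[of t] pos1[of t] that c unfolding \<kappa>_def by (cases "t < c1") auto
    show "\<kappa> t < 0" if "s2 \<le> t" "t < s3" for t
      using cl2[of t] neg1[of t] neg3[of t] that c unfolding \<kappa>_def
      by (cases "t < c2"; cases "t < c3") (auto simp: mult_neg_pos)
  qed (use s12 s34 cc zero1 zero3 cl1 cl3 pos3 in auto)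
qed

lemma affine_orbit_pattern_pos:
  fixes X \<alpha> \<beta> :: "nat \<Rightarrow> real" and c :: real
  defines "v \<equiv> \<lambda>t. Complex (\<beta> t) (1 - \<alpha> t)"
  assumes per: "periodic_seq X n"
    and apos: "\<And>t. t < n \<Longrightarrow> 0 < \<alpha> t" and nz: "\<And>t. t < n \<Longrightarrow> v t \<noteq> 0"
    and sorted: "\<And>t t'. t \<le> t' \<Longrightarrow> t' < n \<Longrightarrow> Arg2pi (v t) \<le> Arg2pi (v t')"
    and step: "\<And>t. t < n \<Longrightarrow> X (Suc t) = \<alpha> t * X t + \<beta> t * c"
    and c: "0 < c"
  obtains k a b e where "flat_fall_flat_rise X n k a b e"
    "\<And>t. t < n \<Longrightarrow> X (Suc t) = X t \<Longrightarrow>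
       k \<le> t \<and> t < a \<and> 0 < \<beta> t * X t + (1 - \<alpha> t) * c \<or>
       b \<le> t \<and> t < e \<and> \<beta> t * X t + (1 - \<alpha> t) * c < 0"
proof -
  define \<kappa> where "\<kappa> t = \<beta> t * c - (1 - \<alpha> t) * X t" for t
  have incr: "X (Suc t) - X t = \<kappa> t" if "t < n" for t
    using step[OF that] unfolding \<kappa>_def by (simp add: algebra_simps)
  obtain s1 s2 s3 s4 where s: "s1 \<le> s2" "s2 \<le> s3" "s3 \<le> s4" "s4 \<le> n"
    and rise1: "\<And>t. t < s1 \<Longrightarrow> 0 < \<kappa> t"
    and flat1: "\<And>t. s1 \<le> t \<Longrightarrow> t < s2 \<Longrightarrow> \<kappa> t = 0 \<and> \<alpha> t < 1"
    and fall: "\<And>t. s2 \<le> t \<Longrightarrow> t < s3 \<Longrightarrow> \<kappa> t < 0"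
    and flat2: "\<And>t. s3 \<le> t \<Longrightarrow> t < s4 \<Longrightarrow> \<kappa> t = 0 \<and> 1 < \<alpha> t"
    and rise2: "\<And>t. s4 \<le> t \<Longrightarrow> t < n \<Longrightarrow> 0 < \<kappa> t"
    using affine_orbit_increment_signs[of n \<alpha> \<beta> X c] assms unfolding \<kappa>_def by blast
  have pattern: "flat_fall_flat_rise X n s1 s2 s3 s4"
  proof (rule flat_fall_flat_rise_of_steps[OF per s])
    show "X t < X (Suc t)" if "t < s1" for t using incr[of t] rise1[OF that] that s by simp
    show "X (Suc t) = X t" if "s1 \<le> t" "t < s2" for t using incr[of t] flat1[OF that] that s by simp
    show "X (Suc t) < X t" if "s2 \<le> t" "t < s3" for t using incr[of t] fall[OF that] that s by simp
    show "X (Suc t) = X t" if "s3 \<le> t" "t < s4" for t using incr[of t] flat2[OF that] that s by simp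
    show "X t < X (Suc t)" if "s4 \<le> t" "t < n" for t using incr[of t] rise2[OF that] that by simp
  qed
  show ?thesis
  proof (rule that[OF pattern])
    fix t assume t: "t < n" "X (Suc t) = X t"
    have k0: "\<kappa> t = 0" using incr[OF t(1)] t(2) by simp
    have "0 < (\<beta> t)\<^sup>2 + (1 - \<alpha> t)\<^sup>2"
      using nz[OF t(1)] unfolding v_def by (simp add: complex_eq_iff sum_power2_gt_zero_iff)
    then have dot: "0 < (1 - \<alpha> t) * (\<beta> t * X t + (1 - \<alpha> t) * c)"
      using affine_plateau_dot[of "\<beta> t" c "\<alpha> t" "X t"] k0 c unfolding \<kappa>_def by simp
    have "\<not> t < s1" "\<not> (s2 \<le> t \<and> t < s3)" "\<not> s4 \<le> t"
      using rise1[of t] fall[of t] rise2[of t] k0 t(1) by auto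
    then show "s1 \<le> t \<and> t < s2 \<and> 0 < \<beta> t * X t + (1 - \<alpha> t) * c \<or>
       s3 \<le> t \<and> t < s4 \<and> \<beta> t * X t + (1 - \<alpha> t) * c < 0"
      using dot flat1[of t] flat2[of t] by (auto simp: zero_less_mult_iff)
  qed
qed

lemma affine_orbit_pattern_zero:
  fixes X \<alpha> \<beta> :: "nat \<Rightarrow> real"
  defines "v \<equiv> \<lambda>t. Complex (\<beta> t) (1 - \<alpha> t)"
  assumes per: "periodic_seq X n"
    and apos: "\<And>t. t < n \<Longrightarrow> 0 < \<alpha> t" and nz: "\<And>t. t < n \<Longrightarrow> v t \<noteq> 0"
    and sorted: "\<And>t t'. t \<le> t' \<Longrightarrow> t' < n \<Longrightarrow> Arg2pi (v t) \<le> Arg2pi (v t')"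
    and step: "\<And>t. t < n \<Longrightarrow> X (Suc t) = \<alpha> t * X t"
    and X0: "0 < X 0"
  obtains k a b e where "flat_fall_flat_rise X n k a b e"
    "\<And>t. t < n \<Longrightarrow> X (Suc t) = X t \<Longrightarrow>
       k \<le> t \<and> t < a \<and> 0 < \<beta> t * X t \<or> b \<le> t \<and> t < e \<and> \<beta> t * X t < 0"
proof -
  obtain c1 c2 c3 where cc: "c1 \<le> c2" "c2 \<le> c3" "c3 \<le> n"
    and cl0: "\<And>t. t < c1 \<Longrightarrow> \<alpha> t = 1 \<and> 0 < \<beta> t"
    and cl1: "\<And>t. c1 \<le> t \<Longrightarrow> t < c2 \<Longrightarrow> \<alpha> t < 1"
    and cl2: "\<And>t. c2 \<le> t \<Longrightarrow> t < c3 \<Longrightarrow> \<alpha> t = 1 \<and> \<beta> t < 0"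
    and cl3: "\<And>t. c3 \<le> t \<Longrightarrow> t < n \<Longrightarrow> 1 < \<alpha> t"
    by (rule Arg2pi_sorted_classes[of n v, OF nz sorted]) (auto simp: v_def)
  have Xpos: "0 < X t" if "t \<le> n" for t
    using that
  proof (induction t)
    case (Suc t)
    then show ?case using step[of t] apos[of t] by simp
  qed (use X0 in simp)
  have pattern: "flat_fall_flat_rise X n 0 c1 c2 c3"
  proof (rule flat_fall_flat_rise_of_steps[OF per _ cc])
    show "X (Suc t) = X t" if "0 \<le> t" "t < c1" for t using step[of t] cl0[of t] that cc by simp
    show "X (Suc t) < X t" if "c1 \<le> t" "t < c2" for t using step[of t] cl1[of t] Xpos[of t] that cc by simp
    show "X (Suc t) = X t" if "c2 \<le> t" "t < c3" for t using step[of t] cl2[of t] that cc by simp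
    show "X t < X (Suc t)" if "c3 \<le> t" "t < n" for t using step[of t] cl3[of t] Xpos[of t] that by simp
  qed simp_all
  show ?thesis
  proof (rule that[OF pattern])
    fix t assume t: "t < n" "X (Suc t) = X t"
    then have "\<alpha> t = 1" using step[OF t(1)] Xpos[of t] by simp
    then have "t < c1 \<or> (c2 \<le> t \<and> t < c3)" using cl1[of t] cl3[of t] t(1) by force
    then show "0 \<le> t \<and> t < c1 \<and> 0 < \<beta> t * X t \<or> c2 \<le> t \<and> t < c3 \<and> \<beta> t * X t < 0"
      using cl0[of t] cl2[of t] Xpos[of t] t(1) by (auto simp: mult_neg_pos)
  qed
qed

definition extremal_plateaus :: "(nat \<Rightarrow> real) \<Rightarrow> (nat \<Rightarrow> real) \<Rightarrow> (nat \<Rightarrow> real) \<Rightarrow> real \<Rightarrow> bool" where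
  "extremal_plateaus X \<alpha> \<beta> c \<longleftrightarrow> (\<forall>t. X (Suc t) = X t \<longrightarrow>
     (0 < \<beta> t * X t + (1 - \<alpha> t) * c \<and> (\<forall>i. X i \<le> X t)) \<or>
     (\<beta> t * X t + (1 - \<alpha> t) * c < 0 \<and> (\<forall>i. X t \<le> X i)))"

lemma extremal_plateaus_uminus:
  "extremal_plateaus (\<lambda>t. - X t) \<alpha> \<beta> (- c) \<Longrightarrow> extremal_plateaus X \<alpha> \<beta> c"
  unfolding extremal_plateaus_def by (auto simp: algebra_simps)

lemma extremal_plateaus_shift:
  assumes "periodic_seq X n" "periodic_seq \<alpha> n" "periodic_seq \<beta> n" "n \<ge> 1"
    and "extremal_plateaus (\<lambda>t. X (r + t)) (\<lambda>t. \<alpha> (r + t)) (\<lambda>t. \<beta> (r + t)) c"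
  shows "extremal_plateaus X \<alpha> \<beta> c"
  unfolding extremal_plateaus_def
proof (intro allI impI)
  have unshift: "y (r + (t + (n - 1) * r)) = y t" if "periodic_seq y n" for y :: "nat \<Rightarrow> real" and t
  proof -
    obtain m where "n = Suc m" using assms(4) by (cases n) auto
    then have eq: "r + (t + (n - 1) * r) = t + r * n" by (simp add: algebra_simps)
    show ?thesis unfolding eq by (rule periodic_seq_add_mult[OF that])
  qed
  fix t assume "X (Suc t) = X t"
  then have "X (r + Suc (t + (n - 1) * r)) = X (r + (t + (n - 1) * r))"
    using unshift[OF assms(1), of t] unshift[OF assms(1), of "Suc t"] by simp
  then have "(0 < \<beta> t * X t + (1 - \<alpha> t) * c \<and> (\<forall>i. X (r + i) \<le> X t)) \<or>
      (\<beta> t * X t + (1 - \<alpha> t) * c < 0 \<and> (\<forall>i. X t \<le> X (r + i)))"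
    using assms(5) unshift[OF assms(1), of t] unshift[OF assms(2), of t] unshift[OF assms(3), of t]
    unfolding extremal_plateaus_def by metis
  moreover have "X i = X (r + (i + (n - 1) * r))" for i using unshift[OF assms(1)] by simp
  ultimately show "(0 < \<beta> t * X t + (1 - \<alpha> t) * c \<and> (\<forall>i. X i \<le> X t)) \<or>
      (\<beta> t * X t + (1 - \<alpha> t) * c < 0 \<and> (\<forall>i. X t \<le> X i))"
    by metis
qed

lemma affine_orbit_shape_normalised:
  fixes X \<alpha> \<beta> :: "nat \<Rightarrow> real"
  defines "v \<equiv> \<lambda>t. Complex (\<beta> t) (1 - \<alpha> t)"
  assumes per: "periodic_seq X n" "periodic_seq \<alpha> n" "periodic_seq \<beta> n" and n: "n \<ge> 1"
    and apos: "\<And>t. t < n \<Longrightarrow> 0 < \<alpha> t" and nz: "\<And>t. t < n \<Longrightarrow> v t \<noteq> 0"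
    and sorted: "\<And>t t'. t \<le> t' \<Longrightarrow> t' < n \<Longrightarrow> Arg2pi (v t) \<le> Arg2pi (v t')"
    and step: "\<And>t. t < n \<Longrightarrow> X (Suc t) = \<alpha> t * X t + \<beta> t * c"
    and c: "0 < c \<or> (c = 0 \<and> 0 < X 0)"
  shows "periodic_unimodal X n \<and> extremal_plateaus X \<alpha> \<beta> c"
proof -
  obtain k a b e where pattern: "flat_fall_flat_rise X n k a b e"
    and plateau: "\<And>t. t < n \<Longrightarrow> X (Suc t) = X t \<Longrightarrow>
       k \<le> t \<and> t < a \<and> 0 < \<beta> t * X t + (1 - \<alpha> t) * c \<or>
       b \<le> t \<and> t < e \<and> \<beta> t * X t + (1 - \<alpha> t) * c < 0"
  proof (cases "0 < c")
    case True
    show ?thesis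
      by (rule affine_orbit_pattern_pos[of X n \<alpha> \<beta> c]) (use assms True that in \<open>auto simp: v_def\<close>)
  next
    case False
    then have "c = 0" "0 < X 0" using c by auto
    then show ?thesis
      using affine_orbit_pattern_zero[of X n \<alpha> \<beta>] assms that unfolding v_def by auto
  qed
  have "extremal_plateaus X \<alpha> \<beta> c"
    unfolding extremal_plateaus_def
  proof (intro allI impI)
    fix t assume flat: "X (Suc t) = X t"
    define t' where "t' = t mod n"
    have t': "t' < n" unfolding t'_def using n by simp
    have same: "y t' = y t" "y (Suc t') = y (Suc t)" if "periodic_seq y n" for y :: "nat \<Rightarrow> real"
      using periodic_seq_mod[OF that] unfolding t'_def by (auto intro: periodic_seq_mod_eq[OF that] simp: mod_Suc_eq)
    have "k \<le> t' \<and> t' < a \<and> 0 < \<beta> t' * X t' + (1 - \<alpha> t') * c \<or>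
       b \<le> t' \<and> t' < e \<and> \<beta> t' * X t' + (1 - \<alpha> t') * c < 0"
      using plateau[OF t'] flat same[OF per(1)] by simp
    then show "(0 < \<beta> t * X t + (1 - \<alpha> t) * c \<and> (\<forall>i. X i \<le> X t)) \<or>
        (\<beta> t * X t + (1 - \<alpha> t) * c < 0 \<and> (\<forall>i. X t \<le> X i))"
      using flat_fall_flat_rise_max[OF per(1) n pattern, of t']
        flat_fall_flat_rise_min[OF per(1) n pattern, of t'] same[OF per(1)] same[OF per(2)] same[OF per(3)]
      by auto
  qed
  then show ?thesis using flat_fall_flat_rise_periodic_unimodal[OF per(1) pattern] by simp
qed

lemma affine_orbit_shape:
  fixes X \<alpha> \<beta> :: "nat \<Rightarrow> real"
  defines "v \<equiv> \<lambda>t. Complex (\<beta> t) (1 - \<alpha> t)"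
  assumes per: "periodic_seq X n" "periodic_seq \<alpha> n" "periodic_seq \<beta> n" and n: "n \<ge> 1"
    and apos: "\<And>t. t < n \<Longrightarrow> 0 < \<alpha> t" and nz: "\<And>t. t < n \<Longrightarrow> v t \<noteq> 0"
    and sorted: "\<And>t t'. t \<le> t' \<Longrightarrow> t' < n \<Longrightarrow> Arg2pi (v t) \<le> Arg2pi (v t')"
    and step: "\<And>t. t < n \<Longrightarrow> X (Suc t) = \<alpha> t * X t + \<beta> t * c"
    and nontrivial: "c \<noteq> 0 \<or> X 0 \<noteq> 0"
  shows "periodic_unimodal X n \<and> extremal_plateaus X \<alpha> \<beta> c"
proof (cases "0 < c \<or> (c = 0 \<and> 0 < X 0)")
  case True
  then show ?thesis using affine_orbit_shape_normalised[of X n \<alpha> \<beta> c] assms by blast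
next
  case False
  then have "0 < - c \<or> (- c = 0 \<and> 0 < - X 0)" using nontrivial by auto
  moreover have "periodic_seq (\<lambda>t. - X t) n" using per(1) unfolding periodic_seq_def by simp
  ultimately have "periodic_unimodal (\<lambda>t. - X t) n \<and> extremal_plateaus (\<lambda>t. - X t) \<alpha> \<beta> (- c)"
    using affine_orbit_shape_normalised[of "\<lambda>t. - X t" n \<alpha> \<beta> "- c"] assms by auto
  then show ?thesis
    using periodic_unimodal_uminus[OF \<open>periodic_seq (\<lambda>t. - X t) n\<close>] extremal_plateaus_uminus by auto
qed

lemma affine_orbit_shape_rotated:
  fixes X \<alpha> \<beta> :: "nat \<Rightarrow> real"
  defines "v \<equiv> \<lambda>t. Complex (\<beta> t) (1 - \<alpha> t)"
  assumes per: "periodic_seq X n" "periodic_seq \<alpha> n" "periodic_seq \<beta> n" and n: "n \<ge> 1"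
    and apos: "\<And>t. 0 < \<alpha> t" and nz: "\<And>t. v t \<noteq> 0"
    and sorted: "\<And>t t'. t \<le> t' \<Longrightarrow> t' < n \<Longrightarrow> Arg2pi (v (r + t)) \<le> Arg2pi (v (r + t'))"
    and step: "\<And>t. X (Suc t) = \<alpha> t * X t + \<beta> t * c"
    and nontrivial: "c \<noteq> 0 \<or> X r \<noteq> 0"
  shows "periodic_unimodal X n \<and> extremal_plateaus X \<alpha> \<beta> c"
proof -
  have "periodic_unimodal (\<lambda>t. X (r + t)) n \<and>
      extremal_plateaus (\<lambda>t. X (r + t)) (\<lambda>t. \<alpha> (r + t)) (\<lambda>t. \<beta> (r + t)) c"
    by (rule affine_orbit_shape) (use assms periodic_seq_shift in \<open>auto simp: v_def\<close>)
  then show ?thesis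
    using periodic_unimodal_shift extremal_plateaus_shift[OF per n] by blast
qed

lemma periodic_linear_orbit_zero:
  fixes B \<alpha> :: "nat \<Rightarrow> real"
  assumes per: "periodic_seq B n" and n: "n \<ge> 1"
    and step: "\<And>i. B (Suc i) = \<alpha> i * B i" and zero: "B r = 0"
  shows "B i = 0"
proof -
  have from_r: "B (r + t) = 0" for t by (induction t) (use zero step in simp_all)
  have "r \<le> r * n" using n by simp
  then have "r + (i + r * n - r) = i + r * n" by linarith
  then show ?thesis using periodic_seq_add_mult[OF per, of i r] from_r by metis
qed

section \<open>Cyclic shifts of composites\<close>

lemma lcomp_assoc: "lcomp (lcomp g h) k = lcomp g (lcomp h k)"
  unfolding lcomp_def by (simp add: algebra_simps)

lemma lcomp_id [simp]: "lcomp (1, 0) g = g" "lcomp g (1, 0) = g"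
  unfolding lcomp_def by auto

lemma comp_seq_cong:
  "(\<And>i. 1 \<le> i \<Longrightarrow> i \<le> m \<Longrightarrow> \<sigma> i = \<sigma>' i) \<Longrightarrow> comp_seq f \<sigma> m = comp_seq f \<sigma>' m"
  by (induction m) auto

lemma comp_seq_add:
  "comp_seq f \<sigma> (a + m) = lcomp (comp_seq f (\<lambda>i. \<sigma> (i + a)) m) (comp_seq f \<sigma> a)"
proof (induction m)
  case (Suc m)
  then show ?case by (simp add: lcomp_assoc add.commute)
qed simp

lemma comp_seq_shift:
  assumes "k \<le> n"
  shows "comp_seq f (shift \<tau> n k) n = lcomp (comp_seq f \<tau> k) (comp_seq f (\<lambda>i. \<tau> (i + k)) (n - k))"
proof -
  have "comp_seq f (shift \<tau> n k) n = comp_seq f (shift \<tau> n k) ((n - k) + k)" using assms by simp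
  also have "\<dots> = lcomp (comp_seq f (\<lambda>i. shift \<tau> n k (i + (n - k))) k) (comp_seq f (shift \<tau> n k) (n - k))"
    by (rule comp_seq_add)
  also have "comp_seq f (\<lambda>i. shift \<tau> n k (i + (n - k))) k = comp_seq f \<tau> k"
    by (rule comp_seq_cong) (use assms in \<open>auto simp: shift_def\<close>)
  also have "comp_seq f (shift \<tau> n k) (n - k) = comp_seq f (\<lambda>i. \<tau> (i + k)) (n - k)"
    by (rule comp_seq_cong) (use assms in \<open>auto simp: shift_def\<close>)
  finally show ?thesis .
qed

lemma comp_seq_shift_0: "comp_seq f (shift \<tau> n 0) n = comp_seq f \<tau> n"
  by (rule comp_seq_cong) (auto simp: shift_def)

lemma comp_seq_shift_self: "comp_seq f (shift \<tau> n n) n = comp_seq f \<tau> n"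
  by (rule comp_seq_cong) (auto simp: shift_def)

lemma fst_comp_seq_shift:
  assumes "k \<le> n" shows "fst (comp_seq f (shift \<tau> n k) n) = fst (comp_seq f \<tau> n)"
  using comp_seq_shift[OF assms] comp_seq_add[of f \<tau> k "n - k"] assms
  by (simp add: lcomp_def)

lemma comp_seq_shift_Suc:
  assumes "k < n"
  shows "lcomp (comp_seq f (shift \<tau> n (Suc k)) n) (f (\<tau> (Suc k)))
       = lcomp (f (\<tau> (Suc k))) (comp_seq f (shift \<tau> n k) n)"
proof -
  define L where "L = comp_seq f \<tau> k"
  define R where "R = comp_seq f (\<lambda>i. \<tau> (i + Suc k)) (n - Suc k)"
  have "comp_seq f (\<lambda>i. \<tau> (i + k)) (n - k) = comp_seq f (\<lambda>i. \<tau> (i + k)) (1 + (n - Suc k))"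
    using assms by (simp add: Suc_diff_Suc)
  also have "\<dots> = lcomp R (f (\<tau> (Suc k)))"
    unfolding comp_seq_add R_def by (simp add: add.commute add.left_commute)
  finally have "comp_seq f (shift \<tau> n k) n = lcomp L (lcomp R (f (\<tau> (Suc k))))"
    using comp_seq_shift[of k n f \<tau>] assms unfolding L_def by simp
  moreover have "comp_seq f (shift \<tau> n (Suc k)) n = lcomp (lcomp (f (\<tau> (Suc k))) L) R"
    using comp_seq_shift[of "Suc k" n f \<tau>] assms unfolding L_def R_def by simp
  ultimately show ?thesis by (simp add: lcomp_assoc)
qed

lemma snd_comp_seq_shift_Suc:
  assumes "k < n"
  shows "snd (comp_seq f (shift \<tau> n (Suc k)) n)
    = fst (f (\<tau> (Suc k))) * snd (comp_seq f (shift \<tau> n k) n) + snd (f (\<tau> (Suc k))) * (1 - fst (comp_seq f \<tau> n))"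
proof -
  have "fst (comp_seq f (shift \<tau> n (Suc k)) n) = fst (comp_seq f \<tau> n)"
    using fst_comp_seq_shift assms by simp
  then show ?thesis
    using arg_cong[OF comp_seq_shift_Suc[OF assms, of f \<tau>], of snd]
    unfolding lcomp_def by (simp add: algebra_simps)
qed

lemma snd_comp_seq_shift_Suc_mod:
  assumes "n \<ge> 1"
  shows "snd (comp_seq f (shift \<tau> n (Suc i mod n)) n)
    = fst (f (\<tau> (i mod n + 1))) * snd (comp_seq f (shift \<tau> n (i mod n)) n)
      + snd (f (\<tau> (i mod n + 1))) * (1 - fst (comp_seq f \<tau> n))"
proof -
  have k: "i mod n < n" using assms by simp
  have "comp_seq f (shift \<tau> n (Suc i mod n)) n = comp_seq f (shift \<tau> n (Suc (i mod n))) n"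
  proof (cases "Suc (i mod n) = n")
    case True
    then have "Suc i mod n = 0" by (simp add: mod_Suc)
    then show ?thesis using True comp_seq_shift_0 comp_seq_shift_self by metis
  qed (simp add: mod_Suc)
  then show ?thesis using snd_comp_seq_shift_Suc[OF k, of f \<tau>] by simp
qed

lemma shifted_composites_affine_orbit:
  assumes n: "n \<ge> 1"
    and F: "\<And>k. F k = comp_seq f (shift \<tau> n k) n" and c: "c = 1 - fst (comp_seq f \<tau> n)"
    and B: "\<And>i. B i = snd (F (i mod n))" and h: "\<And>i. h i = f (\<tau> (i mod n + 1))"
  shows "\<And>k. k < n \<Longrightarrow> F k = (1 - c, B k)"
    and "\<And>i. B (Suc i) = fst (h i) * B i + snd (h i) * c"
    and "periodic_seq B n" "periodic_seq (\<lambda>i. fst (h i)) n" "periodic_seq (\<lambda>i. snd (h i)) n"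
proof -
  show "F k = (1 - c, B k)" if "k < n" for k
    using fst_comp_seq_shift[of k n f \<tau>] that unfolding F B c by (simp add: prod_eq_iff)
  show "B (Suc i) = fst (h i) * B i + snd (h i) * c" for i
    using snd_comp_seq_shift_Suc_mod[OF n] unfolding B F h c by simp
  show "periodic_seq B n" "periodic_seq (\<lambda>i. fst (h i)) n" "periodic_seq (\<lambda>i. snd (h i)) n"
    unfolding periodic_seq_def B h by simp_all
qed

section \<open>The composites of a counterclockwise permutation\<close>

definition cvec :: "linfun \<Rightarrow> complex" where
  "cvec g = Complex (snd g) (1 - fst g)"

lemma cvec_eq_0_iff: "cvec g = 0 \<longleftrightarrow> g = (1, 0)"
  unfolding cvec_def by (auto simp: complex_eq_iff prod_eq_iff)

lemma theta_cvec: "g \<noteq> (1, 0) \<Longrightarrow> theta g = Some (Arg2pi (cvec g))"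
  unfolding theta_def vecf_def cvec_def by (auto simp: prod_eq_iff)

lemma counterclockwise_sorted_rotation:
  assumes n: "n \<ge> 1" and nonid: "\<And>i. i \<in> {1..n} \<Longrightarrow> f (\<tau> i) \<noteq> (1, 0)"
    and ccw: "counterclockwise f n \<tau>"
  obtains r where "\<And>t t'. t \<le> t' \<Longrightarrow> t' < n \<Longrightarrow>
    Arg2pi (cvec (f (\<tau> ((r + t) mod n + 1)))) \<le> Arg2pi (cvec (f (\<tau> ((r + t') mod n + 1))))"
proof -
  define L where "L = map (\<lambda>i. the (theta (f (\<tau> i)))) [1..<n+1]"
  have "filter (\<lambda>i. \<not> identical_lin (f (\<tau> i))) [1..<n+1] = [1..<n+1]"
    using nonid unfolding identical_lin_def by (intro filter_True) auto
  then obtain r where sorted: "sorted (rotate r L)"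
    using ccw unfolding counterclockwise_def L_def by auto
  have "rotate r L ! t = Arg2pi (cvec (f (\<tau> ((r + t) mod n + 1))))" if "t < n" for t
  proof -
    have j: "(r + t) mod n < n" using n by simp
    then have "f (\<tau> ((r + t) mod n + 1)) \<noteq> (1, 0)" using nonid by simp
    then show ?thesis
      using that j nth_rotate[of t L r] theta_cvec unfolding L_def by (simp del: upt_Suc)
  qed
  moreover have "length (rotate r L) = n" unfolding L_def by simp
  ultimately show ?thesis using that sorted_nth_mono[OF sorted] by (metis le_less_trans)
qed

lemma lin_le_same_slope: "lin_le (a, x) (a, y) \<longleftrightarrow> x \<le> y"
  unfolding lin_le_def lapp_def by simp

lemma composites_strictly_unimodal:
  assumes n: "n \<ge> 1" and F: "\<And>k. k < n \<Longrightarrow> F k = (a, B k)" and per: "periodic_seq B n"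
    and uni: "periodic_unimodal B n" and ext: "extremal_plateaus B \<alpha> \<beta> c"
  shows "cyc_strictly_unimodal lin_le n F"
proof (rule cyc_strictly_unimodal_transfer[OF _ _ n])
  show "cyc_strictly_unimodal (\<le>) n B"
    using cyc_strictly_unimodal_if_periodic_unimodal[OF per n uni] ext
    unfolding extremal_plateaus_def by blast
qed (use F lin_le_same_slope in auto)

definition extremum_angle_alternative :: "nat \<Rightarrow> (nat \<Rightarrow> linfun) \<Rightarrow> linfun \<Rightarrow> nat \<Rightarrow> bool" where
  "extremum_angle_alternative n F g k \<longleftrightarrow>
    (let A = ((\<forall>i<n. lin_le (F k) (F i)) \<and> cong2pi (map_option (\<lambda>t. t + pi) (theta g)) (theta (F k)));
         B = ((\<forall>i<n. lin_le (F i) (F k)) \<and> cong2pi (theta g) (theta (F k)))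
     in (A \<and> \<not> B) \<or> (\<not> A \<and> B))"

lemma composites_plateau:
  assumes n: "n \<ge> 1" and F: "\<And>k. k < n \<Longrightarrow> F k = (1 - c, B k)" and per: "periodic_seq B n"
    and ext: "extremal_plateaus B \<alpha> \<beta> c" and step: "B (Suc k) = \<alpha> k * B k + \<beta> k * c"
    and k: "k < n" and flat: "F k = F ((k + 1) mod n)"
    and g: "g \<noteq> (1, 0)" "g = (\<alpha> k, \<beta> k)"
  shows "extremum_angle_alternative n F g k"
proof -
  define v w where "v = cvec g" and "w = cvec (F k)"
  have "B (Suc k) = B k"
    using F[of "(k + 1) mod n"] F[OF k] flat periodic_seq_mod[OF per, of "k + 1"] n by simp
  then have cross: "Im (cnj v * w) = 0" and dot: "Re (cnj v * w) = \<beta> k * B k + (1 - \<alpha> k) * c"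
    using step F[OF k] g unfolding v_def w_def cvec_def by (simp_all add: algebra_simps)
  have v: "v \<noteq> 0" using g(1) cvec_eq_0_iff unfolding v_def by blast
  have order: "lin_le (F i) (F j) \<longleftrightarrow> B i \<le> B j" if "i < n" "j < n" for i j
    using F that lin_le_same_slope by simp
  have theta: "theta g = Some (Arg2pi v)" "theta (F k) = Some (Arg2pi w)" if "Re (cnj v * w) \<noteq> 0"
  proof -
    have "w \<noteq> 0" using that by auto
    then have "F k \<noteq> (1, 0)" unfolding w_def by (simp add: cvec_eq_0_iff)
    then show "theta g = Some (Arg2pi v)" "theta (F k) = Some (Arg2pi w)"
      using theta_cvec g(1) unfolding v_def w_def by auto
  qed
  have "0 < Re (cnj v * w) \<and> (\<forall>i. B i \<le> B k) \<or> Re (cnj v * w) < 0 \<and> (\<forall>i. B k \<le> B i)"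
    using ext \<open>B (Suc k) = B k\<close> unfolding extremal_plateaus_def dot by blast
  then show ?thesis
  proof
    assume max: "0 < Re (cnj v * w) \<and> (\<forall>i. B i \<le> B k)"
    then have "\<forall>i<n. lin_le (F i) (F k)" using order k by simp
    then show ?thesis
      using cong2pi_plateau_pos[OF v cross] max theta unfolding extremum_angle_alternative_def by simp
  next
    assume min: "Re (cnj v * w) < 0 \<and> (\<forall>i. B k \<le> B i)"
    then have "\<forall>i<n. lin_le (F k) (F i)" using order k by simp
    then show ?thesis
      using cong2pi_plateau_neg[OF v cross] min theta unfolding extremum_angle_alternative_def by simp
  qed
qed

lemma composites_shape:
  assumes n: "n \<ge> 1" and F: "\<And>k. k < n \<Longrightarrow> F k = (1 - c, B k)" and per: "periodic_seq B n"
    and uni: "periodic_unimodal B n" and ext: "extremal_plateaus B \<alpha> \<beta> c"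
    and step: "\<And>k. B (Suc k) = \<alpha> k * B k + \<beta> k * c"
    and g: "\<And>k. k < n \<Longrightarrow> g k \<noteq> (1, 0) \<and> g k = (\<alpha> k, \<beta> k)"
  shows "cyc_strictly_unimodal lin_le n F \<and>
    (\<forall>k<n. F k = F ((k + 1) mod n) \<longrightarrow> extremum_angle_alternative n F (g k) k)"
proof (intro conjI allI impI)
  show "cyc_strictly_unimodal lin_le n F" by (rule composites_strictly_unimodal[OF n F per uni ext])
next
  fix k assume k: "k < n" and flat: "F k = F ((k + 1) mod n)"
  have gk: "g k \<noteq> (1, 0)" "g k = (\<alpha> k, \<beta> k)" using g[OF k] by auto
  show "extremum_angle_alternative n F (g k) k"
    by (rule composites_plateau[OF n F per ext step k flat gk])
qed

lemma composites_degenerate: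
  assumes n: "n \<ge> 1" and F: "\<And>k. k < n \<Longrightarrow> F k = (1 - c, B k)" and per: "periodic_seq B n"
    and step: "\<And>i. B (Suc i) = \<alpha> i * B i + \<beta> i * c" and zero: "c = 0" "B r = 0"
  shows "cyc_strictly_unimodal lin_le n F" and "F 0 = (1, 0)"
proof -
  have linear: "B (Suc i) = \<alpha> i * B i" for i using step zero(1) by simp
  have "B i = 0" for i by (rule periodic_linear_orbit_zero[OF per n linear zero(2)])
  then have F0: "F k = (1, 0)" if "k < n" for k using F[OF that] zero(1) by simp
  show "cyc_strictly_unimodal lin_le n F"
    by (rule cyc_strictly_unimodal_const[of lin_le "(1, 0)"]) (use F0 n in \<open>auto simp: lin_le_def\<close>)
  show "F 0 = (1, 0)" using F0 n by simp
qed

theorem mainTheorem13: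
  fixes f :: "nat \<Rightarrow> real \<times> real" and n :: nat and \<tau> :: "nat \<Rightarrow> nat"
  assumes n_pos: "n \<ge> 1"
    and mono: "\<forall>i\<in>{1..n}. monotone_lin (f i)"
    and nonid: "\<forall>i\<in>{1..n}. \<not> identical_lin (f i)"
    and perm: "\<tau> permutes {1..n}"
    and ccw: "counterclockwise f n \<tau>"
  shows "cyc_strictly_unimodal lin_le n (\<lambda>k. comp_seq f (shift \<tau> n k) n)
   \<and> (\<not> colinear f n \<and> \<not> potentially_identical f n \<longrightarrow>
      (\<forall>k<n. comp_seq f (shift \<tau> n k) n = comp_seq f (shift \<tau> n ((k + 1) mod n)) n \<longrightarrow>
        (let F = (\<lambda>i. comp_seq f (shift \<tau> n i) n);
             A = ((\<forall>i<n. lin_le (F k) (F i)) \<and>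
                  cong2pi (map_option (\<lambda>t. t + pi) (theta (f (\<tau> (k + 1))))) (theta (F k)));
             B = ((\<forall>i<n. lin_le (F i) (F k)) \<and>
                  cong2pi (theta (f (\<tau> (k + 1)))) (theta (F k)))
         in (A \<and> \<not> B) \<or> (\<not> A \<and> B))))"
proof -
  define F where "F k = comp_seq f (shift \<tau> n k) n" for k
  define c where "c = 1 - fst (comp_seq f \<tau> n)"
  define B where "B i = snd (F (i mod n))" for i
  define h where "h i = f (\<tau> (i mod n + 1))" for i
  note orbit = shifted_composites_affine_orbit[OF n_pos F_def c_def B_def h_def]
  have h: "0 < fst (h i) \<and> h i \<noteq> (1, 0)" for i
    using mono nonid permutes_in_image[OF perm] n_pos
    unfolding h_def identical_lin_def monotone_lin_def by (simp add: Suc_leI)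
  obtain r where sorted: "\<And>t t'. t \<le> t' \<Longrightarrow> t' < n \<Longrightarrow> Arg2pi (cvec (h (r + t))) \<le> Arg2pi (cvec (h (r + t')))"
    using counterclockwise_sorted_rotation[OF n_pos _ ccw] nonid permutes_in_image[OF perm]
    unfolding identical_lin_def h_def by blast
  show ?thesis
  proof (cases "c = 0 \<and> B r = 0")
    case True
    then have zero: "c = 0" "B r = 0" by simp_all
    note degenerate = composites_degenerate[where \<alpha> = "\<lambda>i. fst (h i)" and \<beta> = "\<lambda>i. snd (h i)",
        OF n_pos orbit(1,3,2) zero]
    have "potentially_identical f n"
      using degenerate(2) perm ccw unfolding potentially_identical_def F_def comp_seq_shift_0 by blast
    with degenerate(1) show ?thesis unfolding F_def by blast
  next
    case False
    have shape: "periodic_unimodal B n \<and> extremal_plateaus B (\<lambda>i. fst (h i)) (\<lambda>i. snd (h i)) c"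
      by (rule affine_orbit_shape_rotated[OF orbit(3-5) n_pos, where r = r])
        (use h sorted orbit(2) False in \<open>auto simp: cvec_def cvec_eq_0_iff[symmetric]\<close>)
    have g: "f (\<tau> (k + 1)) \<noteq> (1, 0) \<and> f (\<tau> (k + 1)) = (fst (h k), snd (h k))" if "k < n" for k
      using h[of k] that unfolding h_def by simp
    show ?thesis
      using composites_shape[where g = "\<lambda>k. f (\<tau> (k + 1))",
          OF n_pos orbit(1,3) shape[THEN conjunct1] shape[THEN conjunct2] orbit(2) g]
      unfolding F_def[abs_def] extremum_angle_alternative_def Let_def by simp
  qed
qed

end
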